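(* Let $k\ge1$, let $a\le b$ be integers, and let $W=(w_1,\dots,w_k)$, $W'=(w'_1,\dots,w'_k)\in(\mathbb C\setminus\{0,-1\})^k$ with $w_i\ne w'_{i'}$ for all $i,i'$. Define $$\hat S_{a,b}(W,W')=\sum_{a\le x_1\le\cdots\le x_k\le b}\det\big[(w_i+1)^{x_j}w_i^j\big]_{i,j=1}^k\det\big[(w'_i+1)^{-x_j}(w'_i)^{-j}\big]_{i,j=1}^k,$$ the sum over integers $x_1,\dots,x_k$. Then $$\hat S_{a,b}(W,W')=\det\Big[\frac{1}{-w_i+w'_{i'}}\cdot\frac{w_i(w_i+1)^a}{w'_{i'}(w'_{i'}+1)^{a-1}}+\frac{1}{w_i-w'_{i'}}\cdot\frac{w_i^k(w_i+1)^{b+1}}{(w'_{i'})^k(w'_{i'}+1)^b}\Big]_{i,i'=1}^k.$$ *)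

theory Defs
  imports "Jordan_Normal_Form.Determinant"
begin

(* Indices are 0-based: row/column i,j in {0..<k} correspond to i+1, j+1 in the paper. *)

definition weak_chains :: "nat \<Rightarrow> int \<Rightarrow> int \<Rightarrow> int list set" where
  "weak_chains k a b = {xs. length xs = k \<and> sorted xs \<and> set xs \<subseteq> {a..b}}"

definition S_hat :: "nat \<Rightarrow> int \<Rightarrow> int \<Rightarrow> (nat \<Rightarrow> complex) \<Rightarrow> (nat \<Rightarrow> complex) \<Rightarrow> complex" where
  "S_hat k a b w w' =
     (\<Sum>xs\<in>weak_chains k a b.
        det (mat k k (\<lambda>(i,j). (w i + 1) powi (xs ! j) * (w i) ^ (j+1)))
      * det (mat k k (\<lambda>(i,j). (w' i + 1) powi (- (xs ! j)) * (w' i) powi (- int (j+1)))))"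

end

theory Submission
  imports Defs
begin

(*
  Both sides are compared by induction on k and, for fixed k, by induction on b starting at
  b = a - 1, where both vanish: there are no chains, and every entry of the kernel matrix is a sum
  of k - 1 products, so the matrix has rank less than k.

  Raising b adds the chains with x_k = b. Expanding both determinants of such a chain along the
  last column writes their total contribution as a sum over (i, i') of
  (-1)^(i+i') alpha_i beta_i' S_{k-1}, where S_{k-1} is the sum for W, W' with w_i, w'_i' removed,
  alpha_i = (w_i + 1)^b w_i^k and beta_i' = (w'_i' + 1)^(-b) w'_i'^(-k).
  On the other side, the kernel matrix for (k, b) is the one for (k, b - 1) plus the rank-one
  matrix alpha beta^T, and the kernel matrix for (k - 1, b) is a rank-one update of the same
  matrix with the same beta. By the matrix determinant lemma the increment of the determinant is
  therefore the same cofactor sum, with S_{k-1} replaced by the determinant for (k - 1, b).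
*)

lemma det_mat_Leibniz:
  "det (mat n n f) = (\<Sum>p\<in>{p. p permutes {0..<n}}. signof p * (\<Prod>i=0..<n. f (i, p i)))"
proof -
  have "det (mat n n f) = (\<Sum>p\<in>{p. p permutes {0..<n}}. signof p * (\<Prod>i=0..<n. mat n n f $$ (i, p i)))"
    by (rule det_def') simp
  also have "\<dots> = (\<Sum>p\<in>{p. p permutes {0..<n}}. signof p * (\<Prod>i=0..<n. f (i, p i)))"
  proof (rule sum.cong[OF refl])
    fix p assume "p \<in> {p. p permutes {0..<n}}"
    then have "i \<in> {0..<n} \<Longrightarrow> p i < n" for i
      using permutes_in_image by fastforce
    then show "signof p * (\<Prod>i=0..<n. mat n n f $$ (i, p i)) = signof p * (\<Prod>i=0..<n. f (i, p i))"
      by (intro arg_cong[where f="\<lambda>x. signof p * x"] prod.cong) auto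
  qed
  finally show ?thesis .
qed

lemma det_mat_row_linear:
  assumes "k < n"
  shows "det (mat n n (\<lambda>(i,j). if i = k then u j + c * v j else f i j)) =
    det (mat n n (\<lambda>(i,j). if i = k then u j else f i j))
    + c * det (mat n n (\<lambda>(i,j). if i = k then v j else f i j))"
proof -
  let ?rest = "\<lambda>p. \<Prod>i\<in>{0..<n} - {k}. f i (p i)"
  have row_k: "(\<Prod>i=0..<n. if i = k then g (p i) else f i (p i)) = g (p k) * ?rest p" for g p
  proof -
    have "(\<Prod>i=0..<n. if i = k then g (p i) else f i (p i))
        = g (p k) * (\<Prod>i\<in>{0..<n} - {k}. if i = k then g (p i) else f i (p i))"
      using assms by (subst prod.remove[of _ k]) auto
    also have "(\<Prod>i\<in>{0..<n} - {k}. if i = k then g (p i) else f i (p i)) = ?rest p"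
      by (rule prod.cong) auto
    finally show ?thesis .
  qed
  have expand: "det (mat n n (\<lambda>(i,j). if i = k then g j else f i j))
      = (\<Sum>p | p permutes {0..<n}. signof p * (g (p k) * ?rest p))" for g
    by (simp add: det_mat_Leibniz row_k)
  show ?thesis
    unfolding expand by (simp add: sum_distrib_left sum.distrib[symmetric] algebra_simps)
qed

lemma det_mat_add_row_multiples:
  fixes N :: "nat \<Rightarrow> nat \<Rightarrow> 'a :: comm_ring_1"
  assumes "t < n" "s \<le> n"
  shows "det (mat n n (\<lambda>(i,j). if i = t then v j else if i < s then N i j + c i * v j else N i j))
       = det (mat n n (\<lambda>(i,j). if i = t then v j else N i j))"
  using assms(2)
proof (induction s)
  case 0
  have "(\<lambda>(i,j). if i = t then v j else if i < 0 then N i j + c i * v j else N i j)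
      = (\<lambda>(i,j). if i = t then v j else N i j)"
    by auto
  then show ?case by simp
next
  case (Suc s)
  show ?case
  proof (cases "s = t")
    case True
    then have "(\<lambda>(i,j). if i = t then v j else if i < Suc s then N i j + c i * v j else N i j)
        = (\<lambda>(i,j). if i = t then v j else if i < s then N i j + c i * v j else N i j)"
      by (auto simp: fun_eq_iff)
    then show ?thesis using Suc by simp
  next
    case False
    let ?f = "\<lambda>i j. if i = t then v j else if i < s then N i j + c i * v j else N i j"
    have "s < n" using Suc by simp
    have split: "(\<lambda>(i,j). if i = t then v j else if i < Suc s then N i j + c i * v j else N i j)
        = (\<lambda>(i,j). if i = s then N s j + c s * v j else ?f i j)"
      using False by (auto simp: fun_eq_iff)
    have unchanged: "(\<lambda>(i,j). if i = s then N s j else ?f i j) = (\<lambda>(i,j). ?f i j)"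
      using False by (auto simp: fun_eq_iff)
    have "det (mat n n (\<lambda>(i,j). if i = s then v j else ?f i j)) = 0"
      by (rule det_identical_rows[of _ n s t]) (use False \<open>s < n\<close> assms(1) in \<open>auto intro!: eq_vecI\<close>)
    then show ?thesis
      unfolding split det_mat_row_linear[OF \<open>s < n\<close>] unchanged using Suc by simp
  qed
qed

lemma det_mat_rank_one_update_rows:
  fixes N :: "nat \<Rightarrow> nat \<Rightarrow> 'a :: comm_ring_1"
  assumes "t \<le> n"
  shows "det (mat n n (\<lambda>(i,j). if i < t then N i j + c i * v j else N i j))
       = det (mat n n (\<lambda>(i,j). N i j))
         + (\<Sum>s<t. c s * det (mat n n (\<lambda>(i,j). if i = s then v j else N i j)))"
  using assms
proof (induction t)
  case 0
  have "(\<lambda>(i,j). if i < 0 then N i j + c i * v j else N i j) = (\<lambda>(i,j). N i j)"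
    by auto
  then show ?case by simp
next
  case (Suc t)
  then have "t < n" by simp
  let ?f = "\<lambda>i j. if i < t then N i j + c i * v j else N i j"
  have split: "(\<lambda>(i,j). if i < Suc t then N i j + c i * v j else N i j)
      = (\<lambda>(i,j). if i = t then N t j + c t * v j else ?f i j)"
    by (auto simp: fun_eq_iff)
  have unchanged: "(\<lambda>(i,j). if i = t then N t j else ?f i j) = (\<lambda>(i,j). ?f i j)"
    by (auto simp: fun_eq_iff)
  have "(\<lambda>(i,j). if i = t then v j else ?f i j)
      = (\<lambda>(i,j). if i = t then v j else if i < t then N i j + c i * v j else N i j)"
    by (auto simp: fun_eq_iff)
  then have "det (mat n n (\<lambda>(i,j). if i = t then v j else ?f i j))
      = det (mat n n (\<lambda>(i,j). if i = t then v j else N i j))"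
    using det_mat_add_row_multiples[OF \<open>t < n\<close> less_imp_le[OF \<open>t < n\<close>]] by simp
  then show ?case
    unfolding split det_mat_row_linear[OF \<open>t < n\<close>] unchanged using Suc by simp
qed

lemma det_mat_replace_row:
  fixes N :: "nat \<Rightarrow> nat \<Rightarrow> 'a :: comm_ring_1"
  assumes "s < n"
  shows "det (mat n n (\<lambda>(i,j). if i = s then v j else N i j))
       = (\<Sum>j<n. v j * cofactor (mat n n (\<lambda>(i,j). N i j)) s j)"
proof -
  let ?A = "mat n n (\<lambda>(i,j). if i = s then v j else N i j)"
  have "det ?A = (\<Sum>j<n. ?A $$ (s,j) * cofactor ?A s j)"
    using assms by (intro laplace_expansion_row) auto
  also have "\<dots> = (\<Sum>j<n. v j * cofactor (mat n n (\<lambda>(i,j). N i j)) s j)"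
  proof (rule sum.cong[OF refl])
    fix j assume "j \<in> {..<n}"
    have "mat_delete ?A s j = mat_delete (mat n n (\<lambda>(i,j). N i j)) s j"
      unfolding mat_delete_def by (rule eq_matI) auto
    then show "?A $$ (s,j) * cofactor ?A s j = v j * cofactor (mat n n (\<lambda>(i,j). N i j)) s j"
      using assms \<open>j \<in> {..<n}\<close> by (simp add: cofactor_def)
  qed
  finally show ?thesis .
qed

lemma det_mat_rank_one_update:
  fixes N :: "nat \<Rightarrow> nat \<Rightarrow> 'a :: comm_ring_1"
  shows "det (mat n n (\<lambda>(i,j). N i j + c i * v j))
       = det (mat n n (\<lambda>(i,j). N i j))
         + (\<Sum>s<n. \<Sum>j<n. c s * v j * cofactor (mat n n (\<lambda>(i,j). N i j)) s j)"
proof -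
  have "mat n n (\<lambda>(i,j). N i j + c i * v j) = mat n n (\<lambda>(i,j). if i < n then N i j + c i * v j else N i j)"
    by (rule eq_matI) auto
  then show ?thesis
    using det_mat_rank_one_update_rows[of n n N c v]
    by (simp add: det_mat_replace_row sum_distrib_left mult.assoc)
qed

text \<open>The contraction of the cofactors with the row vector \<open>v\<close> does not change under rank-one
  updates \<open>c v\<^sup>T\<close>, so the cofactors may be taken from any such update of \<open>N\<close>.\<close>

lemma det_mat_rank_one_update_diff:
  fixes N :: "nat \<Rightarrow> nat \<Rightarrow> 'a :: comm_ring_1"
  shows "det (mat n n (\<lambda>(i,j). N i j + c i * v j)) - det (mat n n (\<lambda>(i,j). N i j))
       = (\<Sum>s<n. \<Sum>j<n. c s * v j * cofactor (mat n n (\<lambda>(i,j). N i j + d i * v j)) s j)"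
proof -
  let ?N' = "\<lambda>i j. N i j + d i * v j"
  let ?C = "\<lambda>s j. cofactor (mat n n (\<lambda>(i,j). ?N' i j)) s j"
  have "(\<lambda>(i,j). N i j + c i * v j) = (\<lambda>(i,j). ?N' i j + (c i - d i) * v j)"
    and "(\<lambda>(i,j). N i j) = (\<lambda>(i,j). ?N' i j + (- d i) * v j)"
    by (auto simp: fun_eq_iff algebra_simps)
  then have "det (mat n n (\<lambda>(i,j). N i j + c i * v j)) - det (mat n n (\<lambda>(i,j). N i j))
      = (\<Sum>s<n. \<Sum>j<n. (c s - d s) * v j * ?C s j) - (\<Sum>s<n. \<Sum>j<n. (- d s) * v j * ?C s j)"
    using det_mat_rank_one_update[of n ?N' "\<lambda>i. c i - d i" v]
      det_mat_rank_one_update[of n ?N' "\<lambda>i. - d i" v]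
    by simp
  also have "\<dots> = (\<Sum>s<n. \<Sum>j<n. c s * v j * ?C s j)"
    by (simp add: sum_subtractf[symmetric] algebra_simps)
  finally show ?thesis .
qed

lemma mat_delete_mat:
  "mat_delete (mat (Suc n) (Suc n) f) s j = mat n n (\<lambda>(i,j'). f (insert_index s i, insert_index j j'))"
  by (rule eq_matI) (auto simp: mat_delete_def insert_index_def)

lemma det_mat_expand_last_col:
  "det (mat (Suc m) (Suc m) f)
     = (\<Sum>s<Suc m. (-1) ^ (s + m) * f (s, m) * det (mat m m (\<lambda>(i,j). f (insert_index s i, j))))"
proof -
  have "det (mat (Suc m) (Suc m) f) = (\<Sum>s<Suc m. f (s, m) * cofactor (mat (Suc m) (Suc m) f) s m)"
    by (subst laplace_expansion_column[of _ "Suc m" m]) auto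
  also have "\<dots> = (\<Sum>s<Suc m. (-1) ^ (s + m) * f (s, m) * det (mat m m (\<lambda>(i,j). f (insert_index s i, j))))"
  proof (rule sum.cong[OF refl])
    fix s
    have "mat m m (\<lambda>(i,j). f (insert_index s i, insert_index m j)) = mat m m (\<lambda>(i,j). f (insert_index s i, j))"
      by (rule eq_matI) auto
    then show "f (s, m) * cofactor (mat (Suc m) (Suc m) f) s m
        = (-1) ^ (s + m) * f (s, m) * det (mat m m (\<lambda>(i,j). f (insert_index s i, j)))"
      by (simp add: cofactor_def mat_delete_mat)
  qed
  finally show ?thesis .
qed

lemma finite_weak_chains: "finite (weak_chains k a b)"
proof (rule finite_subset)
  show "weak_chains k a b \<subseteq> {xs. set xs \<subseteq> {a..b} \<and> length xs = k}"
    unfolding weak_chains_def by auto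
qed (simp add: finite_lists_length_eq)

lemma weak_chains_0: "weak_chains 0 a b = {[]}"
  unfolding weak_chains_def by auto

lemma weak_chains_Suc_empty: "weak_chains (Suc m) a (a - 1) = {}"
  unfolding weak_chains_def by (auto simp: length_Suc_conv)

lemma weak_chains_Suc:
  assumes "a \<le> b"
  shows "weak_chains (Suc m) a b = weak_chains (Suc m) a (b - 1) \<union> (\<lambda>ys. ys @ [b]) ` weak_chains m a b"
proof (intro equalityI subsetI)
  fix xs assume xs: "xs \<in> weak_chains (Suc m) a b"
  then have "xs \<noteq> []"
    unfolding weak_chains_def by auto
  then obtain ys y where xs_eq: "xs = ys @ [y]"
    by (metis rev_exhaust)
  have ys: "length ys = m" "sorted ys" "set ys \<subseteq> {a..b}" and "\<forall>z\<in>set ys. z \<le> y" "y \<in> {a..b}"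
    using xs unfolding weak_chains_def xs_eq by (auto simp: sorted_append)
  show "xs \<in> weak_chains (Suc m) a (b - 1) \<union> (\<lambda>ys. ys @ [b]) ` weak_chains m a b"
  proof (cases "y = b")
    case True
    then show ?thesis using ys unfolding xs_eq weak_chains_def by auto
  next
    case False
    then have "set xs \<subseteq> {a..b - 1}"
      using \<open>\<forall>z\<in>set ys. z \<le> y\<close> \<open>y \<in> {a..b}\<close> ys(3) unfolding xs_eq by fastforce
    then show ?thesis using xs unfolding weak_chains_def by auto
  qed
next
  fix xs assume "xs \<in> weak_chains (Suc m) a (b - 1) \<union> (\<lambda>ys. ys @ [b]) ` weak_chains m a b"
  then show "xs \<in> weak_chains (Suc m) a b"
    using assms unfolding weak_chains_def by (fastforce simp: sorted_append)
qed

lemma weak_chains_Suc_disjoint: "weak_chains (Suc m) a (b - 1) \<inter> (\<lambda>ys. ys @ [b]) ` weak_chains m a b = {}"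
  unfolding weak_chains_def by auto

definition entry_A :: "nat \<Rightarrow> int \<Rightarrow> complex \<Rightarrow> complex" where
  "entry_A j c z = (z + 1) powi c * z ^ (j + 1)"

definition entry_B :: "nat \<Rightarrow> int \<Rightarrow> complex \<Rightarrow> complex" where
  "entry_B j c z = (z + 1) powi (- c) * z powi (- int (j + 1))"

definition chain_det_A :: "nat \<Rightarrow> int list \<Rightarrow> (nat \<Rightarrow> complex) \<Rightarrow> complex" where
  "chain_det_A k xs w = det (mat k k (\<lambda>(i,j). entry_A j (xs ! j) (w i)))"

definition chain_det_B :: "nat \<Rightarrow> int list \<Rightarrow> (nat \<Rightarrow> complex) \<Rightarrow> complex" where
  "chain_det_B k xs w = det (mat k k (\<lambda>(i,j). entry_B j (xs ! j) (w i)))"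

lemma S_hat_eq_chain_dets:
  "S_hat k a b w w' = (\<Sum>xs\<in>weak_chains k a b. chain_det_A k xs w * chain_det_B k xs w')"
  unfolding S_hat_def chain_det_A_def chain_det_B_def entry_A_def entry_B_def ..

lemma chain_det_A_snoc:
  assumes "length ys = m"
  shows "chain_det_A (Suc m) (ys @ [c]) w
       = (\<Sum>s<Suc m. (-1) ^ (s + m) * entry_A m c (w s) * chain_det_A m ys (w \<circ> insert_index s))"
proof -
  have "mat m m (\<lambda>(i,j). entry_A j ((ys @ [c]) ! j) (w (insert_index s i)))
      = mat m m (\<lambda>(i,j). entry_A j (ys ! j) ((w \<circ> insert_index s) i))" for s
    using assms by (intro eq_matI) (auto simp: nth_append)
  then show ?thesis
    unfolding chain_det_A_def det_mat_expand_last_col using assms by (simp add: nth_append)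
qed

lemma chain_det_B_snoc:
  assumes "length ys = m"
  shows "chain_det_B (Suc m) (ys @ [c]) w
       = (\<Sum>s<Suc m. (-1) ^ (s + m) * entry_B m c (w s) * chain_det_B m ys (w \<circ> insert_index s))"
proof -
  have "mat m m (\<lambda>(i,j). entry_B j ((ys @ [c]) ! j) (w (insert_index s i)))
      = mat m m (\<lambda>(i,j). entry_B j (ys ! j) ((w \<circ> insert_index s) i))" for s
    using assms by (intro eq_matI) (auto simp: nth_append)
  then show ?thesis
    unfolding chain_det_B_def det_mat_expand_last_col using assms by (simp add: nth_append)
qed

lemma neg_one_power_add_cancel: "(-1 :: 'a :: comm_ring_1) ^ (s + m) * (-1) ^ (j + m) = (-1) ^ (s + j)"
proof -
  have "(-1 :: 'a) ^ (s + m) * (-1) ^ (j + m) = (-1) ^ (s + j) * ((-1) ^ m * (-1) ^ m)"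
    by (simp add: power_add mult_ac)
  also have "(-1 :: 'a) ^ m * (-1) ^ m = 1"
    by (simp flip: power_add)
  finally show ?thesis by simp
qed

lemma S_hat_Suc_step:
  assumes "a \<le> b"
  shows "S_hat (Suc m) a b w w' = S_hat (Suc m) a (b - 1) w w'
    + (\<Sum>s<Suc m. \<Sum>j<Suc m. (-1) ^ (s + j) * entry_A m b (w s) * entry_B m b (w' j)
         * S_hat m a b (w \<circ> insert_index s) (w' \<circ> insert_index j))"
proof -
  let ?F = "\<lambda>xs. chain_det_A (Suc m) xs w * chain_det_B (Suc m) xs w'"
  let ?term = "\<lambda>ys s j. (-1) ^ (s + j) * entry_A m b (w s) * entry_B m b (w' j)
      * (chain_det_A m ys (w \<circ> insert_index s) * chain_det_B m ys (w' \<circ> insert_index j))"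
  have top: "?F (ys @ [b]) = (\<Sum>s<Suc m. \<Sum>j<Suc m. ?term ys s j)" if "ys \<in> weak_chains m a b" for ys
  proof -
    have "length ys = m" using that unfolding weak_chains_def by simp
    then show ?thesis
      unfolding chain_det_A_snoc[OF \<open>length ys = m\<close>] chain_det_B_snoc[OF \<open>length ys = m\<close>] sum_product
    proof (intro sum.cong refl)
      fix s j
      show "(-1) ^ (s + m) * entry_A m b (w s) * chain_det_A m ys (w \<circ> insert_index s)
          * ((-1) ^ (j + m) * entry_B m b (w' j) * chain_det_B m ys (w' \<circ> insert_index j)) = ?term ys s j"
        unfolding neg_one_power_add_cancel[of s m j, symmetric] by (simp only: ac_simps)
    qed
  qed
  have "inj_on (\<lambda>ys. ys @ [b]) (weak_chains m a b)"
    by (simp add: inj_on_def)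
  then have "S_hat (Suc m) a b w w' = S_hat (Suc m) a (b - 1) w w' + (\<Sum>ys\<in>weak_chains m a b. ?F (ys @ [b]))"
    unfolding S_hat_eq_chain_dets weak_chains_Suc[OF assms]
    by (subst sum.union_disjoint) (auto simp: finite_weak_chains weak_chains_Suc_disjoint sum.reindex)
  also have "(\<Sum>ys\<in>weak_chains m a b. ?F (ys @ [b])) = (\<Sum>s<Suc m. \<Sum>j<Suc m. \<Sum>ys\<in>weak_chains m a b. ?term ys s j)"
    by (simp add: top sum.swap[of _ "weak_chains m a b"] cong: sum.cong)
  also have "\<dots> = (\<Sum>s<Suc m. \<Sum>j<Suc m. (-1) ^ (s + j) * entry_A m b (w s) * entry_B m b (w' j)
         * S_hat m a b (w \<circ> insert_index s) (w' \<circ> insert_index j))"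
    by (simp add: S_hat_eq_chain_dets sum_distrib_left)
  finally show ?thesis .
qed

text \<open>With \<open>q = x / y\<close> and \<open>t = (x + 1) / (y + 1)\<close> this is \<open>(q\<^sup>k t\<^sup>b (x + 1) - q t\<^sup>a (y + 1)) / (x - y)\<close>,
  the entry of the matrix on the right-hand side (\<open>kernel_eq\<close>); in this form its recursions in \<open>k\<close>
  and \<open>b\<close> are identities between monomials in \<open>q\<close> and \<open>t\<close>.\<close>

definition kernel :: "nat \<Rightarrow> int \<Rightarrow> int \<Rightarrow> complex \<Rightarrow> complex \<Rightarrow> complex" where
  "kernel k a b x y =
     ((x / y) ^ k * ((x + 1) / (y + 1)) powi b * (x + 1) - x / y * ((x + 1) / (y + 1)) powi a * (y + 1))
     / (x - y)"

lemma kernel_eq: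
  assumes "x + 1 \<noteq> 0" "y \<noteq> 0" "y + 1 \<noteq> 0"
  shows "kernel k a b x y =
    1 / (- x + y) * (x * (x + 1) powi a / (y * (y + 1) powi (a - 1)))
    + 1 / (x - y) * (x ^ k * (x + 1) powi (b + 1) / (y ^ k * (y + 1) powi b))"
proof -
  have "(y + 1) powi (a - 1) \<noteq> 0"
    using assms by simp
  moreover have "(y + 1) powi a = (y + 1) powi (a - 1) * (y + 1)"
    using assms by (simp add: power_int_diff)
  ultimately have "x / y * ((x + 1) / (y + 1)) powi a * (y + 1) = x * (x + 1) powi a / (y * (y + 1) powi (a - 1))"
    using assms by (simp add: power_int_divide_distrib)
  moreover have "(x + 1) powi (b + 1) = (x + 1) powi b * (x + 1)"
    using assms by (simp add: power_int_add)
  then have "(x / y) ^ k * ((x + 1) / (y + 1)) powi b * (x + 1) = x ^ k * (x + 1) powi (b + 1) / (y ^ k * (y + 1) powi b)"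
    by (simp add: power_int_divide_distrib power_divide)
  moreover have "1 / (- x + y) = - (1 / (x - y))"
    by (simp add: minus_divide_right)
  ultimately show ?thesis
    unfolding kernel_def by (simp add: diff_divide_distrib ac_simps)
qed

lemma entry_B_eq: "entry_B j c z = 1 / ((z + 1) powi c * z ^ (j + 1))"
  unfolding entry_B_def power_int_minus power_int_of_nat by (simp add: field_simps)

lemma entry_A_mult_entry_B:
  "entry_A j c x * entry_B j c y = (x / y) ^ (j + 1) * ((x + 1) / (y + 1)) powi c"
  by (simp add: entry_A_def entry_B_eq power_int_divide_distrib power_divide ac_simps)

lemma kernel_diff:
  "kernel k a b x y - kernel k' a b' x y =
     (x + 1) / (x - y) * ((x / y) ^ k * ((x + 1) / (y + 1)) powi b - (x / y) ^ k' * ((x + 1) / (y + 1)) powi b')"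
  unfolding kernel_def by (simp add: diff_divide_distrib algebra_simps)

lemma kernel_top_step:
  assumes "x + 1 \<noteq> 0" "y \<noteq> 0" "y + 1 \<noteq> 0" "x \<noteq> y"
  shows "kernel (Suc m) a b x y - kernel (Suc m) a (b - 1) x y = entry_A m b x * entry_B m b y"
proof -
  define q t where "q = x / y" and "t = (x + 1) / (y + 1)"
  have tb: "t powi b = t powi (b - 1) * t"
    using assms by (simp add: t_def power_int_diff)
  have "kernel (Suc m) a b x y - kernel (Suc m) a (b - 1) x y
      = (x + 1) / (x - y) * (q ^ Suc m * t powi (b - 1) * (t - 1))"
    unfolding kernel_diff q_def[symmetric] t_def[symmetric] tb by (simp add: algebra_simps)
  also have "t - 1 = (x - y) / (y + 1)"
    using assms by (simp add: t_def field_simps)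
  also have "(x + 1) / (x - y) * (q ^ Suc m * t powi (b - 1) * ((x - y) / (y + 1))) = q ^ Suc m * t powi b"
    using assms unfolding tb by (simp add: t_def)
  also have "\<dots> = entry_A m b x * entry_B m b y"
    by (simp add: q_def t_def entry_A_mult_entry_B)
  finally show ?thesis .
qed

lemma kernel_size_top_step:
  assumes "x + 1 \<noteq> 0" "y \<noteq> 0" "y + 1 \<noteq> 0" "x \<noteq> y"
  shows "kernel (Suc m) a (b - 1) x y - kernel m a b x y = x ^ m * (x + 1) powi b * entry_B m b y"
proof -
  define q t where "q = x / y" and "t = (x + 1) / (y + 1)"
  have tb: "t powi b = t powi (b - 1) * t"
    using assms by (simp add: t_def power_int_diff)
  have "kernel (Suc m) a (b - 1) x y - kernel m a b x y
      = (x + 1) / (x - y) * (q ^ m * t powi (b - 1) * (q - t))"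
    unfolding kernel_diff q_def[symmetric] t_def[symmetric] tb by (simp add: algebra_simps)
  also have "q - t = (x - y) / (y * (y + 1))"
    using assms by (simp add: q_def t_def field_simps)
  also have "(x + 1) / (x - y) * (q ^ m * t powi (b - 1) * ((x - y) / (y * (y + 1)))) = q ^ m * t powi b / y"
    using assms unfolding tb by (simp add: t_def ac_simps)
  also have "\<dots> = x ^ m * (x + 1) powi b * entry_B m b y"
    by (simp add: q_def t_def entry_B_eq power_int_divide_distrib power_divide)
  finally show ?thesis .
qed

lemma kernel_size_step:
  assumes "x + 1 \<noteq> 0" "y \<noteq> 0" "x \<noteq> y"
  shows "kernel (Suc (Suc m)) a b x y - kernel (Suc m) a b x y = entry_A m (b + 1) x * entry_B (Suc m) b y"
proof -
  define q t where "q = x / y" and "t = (x + 1) / (y + 1)"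
  have "kernel (Suc (Suc m)) a b x y - kernel (Suc m) a b x y
      = (x + 1) / (x - y) * (q ^ Suc m * t powi b * (q - 1))"
    unfolding kernel_diff q_def[symmetric] t_def[symmetric] by (simp add: algebra_simps)
  also have "q - 1 = (x - y) / y"
    using assms by (simp add: q_def field_simps)
  also have "(x + 1) / (x - y) * (q ^ Suc m * t powi b * ((x - y) / y)) = q ^ Suc m * t powi b * (x + 1) / y"
    using assms by simp
  also have "\<dots> = entry_A m (b + 1) x * entry_B (Suc m) b y"
  proof -
    have "(x + 1) powi (b + 1) = (x + 1) powi b * (x + 1)"
      using assms by (simp add: power_int_add)
    then show ?thesis
      by (simp add: q_def t_def entry_A_def entry_B_eq power_int_divide_distrib power_divide ac_simps)
  qed
  finally show ?thesis .
qed

lemma kernel_bottom: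
  assumes "x + 1 \<noteq> 0" "y \<noteq> 0" "y + 1 \<noteq> 0" "x \<noteq> y"
  shows "kernel (Suc m) a (a - 1) x y = (\<Sum>j<m. entry_A j a x * entry_B (Suc j) (a - 1) y)"
proof (induction m)
  case 0
  have "((x + 1) / (y + 1)) powi a = ((x + 1) / (y + 1)) powi (a - 1) * ((x + 1) / (y + 1))"
    using assms by (simp add: power_int_diff)
  then show ?case
    using assms unfolding kernel_def by simp
next
  case (Suc m)
  then show ?case
    using kernel_size_step[OF assms(1,2,4), of m a "a - 1"] by (simp add: algebra_simps)
qed

definition kernel_det :: "nat \<Rightarrow> int \<Rightarrow> int \<Rightarrow> (nat \<Rightarrow> complex) \<Rightarrow> (nat \<Rightarrow> complex) \<Rightarrow> complex" where
  "kernel_det k a b w w' = det (mat k k (\<lambda>(i,j). kernel k a b (w i) (w' j)))"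

definition admissible :: "nat \<Rightarrow> (nat \<Rightarrow> complex) \<Rightarrow> (nat \<Rightarrow> complex) \<Rightarrow> bool" where
  "admissible k w w' \<longleftrightarrow> (\<forall>i<k. \<forall>j<k. w i + 1 \<noteq> 0 \<and> w' j \<noteq> 0 \<and> w' j + 1 \<noteq> 0 \<and> w i \<noteq> w' j)"

lemma insert_index_less_Suc: "i < m \<Longrightarrow> insert_index s i < Suc m"
  by (simp add: insert_index_def)

lemma admissible_insert_index:
  assumes "admissible (Suc m) w w'"
  shows "admissible m (w \<circ> insert_index s) (w' \<circ> insert_index t)"
  unfolding admissible_def
proof (intro allI impI)
  fix i j assume "i < m" "j < m"
  then have "insert_index s i < Suc m" "insert_index t j < Suc m"
    by (simp_all add: insert_index_less_Suc)
  then show "(w \<circ> insert_index s) i + 1 \<noteq> 0 \<and> (w' \<circ> insert_index t) j \<noteq> 0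
      \<and> (w' \<circ> insert_index t) j + 1 \<noteq> 0 \<and> (w \<circ> insert_index s) i \<noteq> (w' \<circ> insert_index t) j"
    using assms unfolding admissible_def by simp
qed

lemma kernel_det_Suc_step:
  assumes "admissible (Suc m) w w'"
  shows "kernel_det (Suc m) a b w w' = kernel_det (Suc m) a (b - 1) w w'
    + (\<Sum>s<Suc m. \<Sum>j<Suc m. (-1) ^ (s + j) * entry_A m b (w s) * entry_B m b (w' j)
         * kernel_det m a b (w \<circ> insert_index s) (w' \<circ> insert_index j))"
proof -
  let ?N = "\<lambda>i j. kernel (Suc m) a (b - 1) (w i) (w' j)"
  let ?c = "\<lambda>i. entry_A m b (w i)" and ?v = "\<lambda>j. entry_B m b (w' j)"
  let ?d = "\<lambda>i. - (w i ^ m * (w i + 1) powi b)"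
  have adm: "w i + 1 \<noteq> 0" "w' j \<noteq> 0" "w' j + 1 \<noteq> 0" "w i \<noteq> w' j" if "i < Suc m" "j < Suc m" for i j
    using assms that unfolding admissible_def by blast+
  have top_entry: "kernel (Suc m) a b (w i) (w' j) = ?N i j + ?c i * ?v j" if "i < Suc m" "j < Suc m" for i j
    using kernel_top_step[OF adm[OF that], of m a b] by (simp add: diff_eq_eq add.commute)
  have size_entry: "?N i j - w i ^ m * (w i + 1) powi b * ?v j = kernel m a b (w i) (w' j)"
    if "i < Suc m" "j < Suc m" for i j
    using kernel_size_top_step[OF adm[OF that], of m a b] by (simp add: diff_eq_eq)
  have top: "mat (Suc m) (Suc m) (\<lambda>(i,j). kernel (Suc m) a b (w i) (w' j))
      = mat (Suc m) (Suc m) (\<lambda>(i,j). ?N i j + ?c i * ?v j)"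
    by (intro eq_matI) (simp_all add: top_entry)
  have size: "mat_delete (mat (Suc m) (Suc m) (\<lambda>(i,j). ?N i j + ?d i * ?v j)) s j
      = mat m m (\<lambda>(i,j'). kernel m a b ((w \<circ> insert_index s) i) ((w' \<circ> insert_index j) j'))" for s j
    unfolding mat_delete_mat by (intro eq_matI) (simp_all add: size_entry insert_index_less_Suc)
  have "kernel_det (Suc m) a b w w' - kernel_det (Suc m) a (b - 1) w w'
      = (\<Sum>s<Suc m. \<Sum>j<Suc m. ?c s * ?v j * cofactor (mat (Suc m) (Suc m) (\<lambda>(i,j). ?N i j + ?d i * ?v j)) s j)"
    unfolding kernel_det_def top by (rule det_mat_rank_one_update_diff)
  also have "\<dots> = (\<Sum>s<Suc m. \<Sum>j<Suc m. (-1) ^ (s + j) * ?c s * ?v j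
         * kernel_det m a b (w \<circ> insert_index s) (w' \<circ> insert_index j))"
    unfolding cofactor_def size kernel_det_def by (simp add: ac_simps)
  finally show ?thesis by (simp add: diff_eq_eq add.commute)
qed

text \<open>At \<open>b = a - 1\<close> every entry of the kernel matrix is a sum of \<open>m\<close> products, so the
  \<open>(m + 1) \<times> (m + 1)\<close> matrix has rank at most \<open>m\<close>.\<close>

lemma kernel_det_Suc_bottom:
  assumes "admissible (Suc m) w w'"
  shows "kernel_det (Suc m) a (a - 1) w w' = 0"
proof -
  let ?P = "mat (Suc m) (Suc m) (\<lambda>(i,j). if j < m then entry_A j a (w i) else 0)"
  let ?Q = "mat (Suc m) (Suc m) (\<lambda>(j,l). if j < m then entry_B (Suc j) (a - 1) (w' l) else 0)"
  have factor: "mat (Suc m) (Suc m) (\<lambda>(i,l). kernel (Suc m) a (a - 1) (w i) (w' l)) = ?P * ?Q"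
  proof (rule eq_matI)
    fix i l assume "i < dim_row (?P * ?Q)" "l < dim_col (?P * ?Q)"
    then have il: "i < Suc m" "l < Suc m" by auto
    then have "(?P * ?Q) $$ (i, l) = (\<Sum>j\<in>{0..<Suc m}. ?P $$ (i, j) * ?Q $$ (j, l))"
      by (simp add: scalar_prod_def)
    also have "\<dots> = (\<Sum>j<m. entry_A j a (w i) * entry_B (Suc j) (a - 1) (w' l))"
      using il by (simp add: atLeast0LessThan sum.lessThan_Suc)
    also have "\<dots> = kernel (Suc m) a (a - 1) (w i) (w' l)"
      using assms il unfolding admissible_def by (simp add: kernel_bottom)
    finally show "mat (Suc m) (Suc m) (\<lambda>(i,l). kernel (Suc m) a (a - 1) (w i) (w' l)) $$ (i, l) = (?P * ?Q) $$ (i, l)"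
      using il by simp
  qed auto
  have "kernel_det (Suc m) a (a - 1) w w' = det ?P * det ?Q"
    unfolding kernel_det_def factor by (rule det_mult) auto
  also have "det ?P = 0"
    by (subst laplace_expansion_column[of _ "Suc m" m]) auto
  finally show ?thesis by simp
qed

lemma S_hat_eq_kernel_det:
  assumes "admissible k w w'" "a - 1 \<le> b"
  shows "S_hat k a b w w' = kernel_det k a b w w'"
  using assms
proof (induction k arbitrary: w w' b)
  case 0
  then show ?case by (simp add: S_hat_def kernel_det_def weak_chains_0)
next
  case (Suc m)
  from \<open>a - 1 \<le> b\<close> show ?case
  proof (induction b rule: int_ge_induct)
    case base
    show ?case
      using kernel_det_Suc_bottom[OF \<open>admissible (Suc m) w w'\<close>]
      by (simp add: S_hat_def weak_chains_Suc_empty)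
  next
    case (step b)
    have IH: "S_hat m a (b + 1) (w \<circ> insert_index s) (w' \<circ> insert_index j)
        = kernel_det m a (b + 1) (w \<circ> insert_index s) (w' \<circ> insert_index j)" for s j
      using step.hyps by (intro Suc.IH admissible_insert_index[OF \<open>admissible (Suc m) w w'\<close>]) simp
    have "S_hat (Suc m) a (b + 1) w w' = S_hat (Suc m) a b w w'
      + (\<Sum>s<Suc m. \<Sum>j<Suc m. (-1) ^ (s + j) * entry_A m (b + 1) (w s) * entry_B m (b + 1) (w' j)
         * S_hat m a (b + 1) (w \<circ> insert_index s) (w' \<circ> insert_index j))"
      using S_hat_Suc_step[of a "b + 1" m w w'] step.hyps by simp
    also have "\<dots> = kernel_det (Suc m) a b w w'
      + (\<Sum>s<Suc m. \<Sum>j<Suc m. (-1) ^ (s + j) * entry_A m (b + 1) (w s) * entry_B m (b + 1) (w' j)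
         * kernel_det m a (b + 1) (w \<circ> insert_index s) (w' \<circ> insert_index j))"
      using step.IH IH by simp
    also have "\<dots> = kernel_det (Suc m) a (b + 1) w w'"
      using kernel_det_Suc_step[OF \<open>admissible (Suc m) w w'\<close>, of a "b + 1"] by simp
    finally show ?case .
  qed
qed

theorem mainTheorem10:
  fixes k :: nat and a b :: int and w w' :: "nat \<Rightarrow> complex"
  assumes "k \<ge> 1" and "a \<le> b"
    and "\<And>i. i < k \<Longrightarrow> w i \<noteq> 0 \<and> w i \<noteq> -1"
    and "\<And>i. i < k \<Longrightarrow> w' i \<noteq> 0 \<and> w' i \<noteq> -1"
    and "\<And>i i'. i < k \<Longrightarrow> i' < k \<Longrightarrow> w i \<noteq> w' i'"
  shows "S_hat k a b w w' =
    det (mat k k (\<lambda>(i,i').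
        1 / (- w i + w' i') * (w i * (w i + 1) powi a / (w' i' * (w' i' + 1) powi (a - 1)))
      + 1 / (w i - w' i') * ((w i) ^ k * (w i + 1) powi (b + 1) / ((w' i') ^ k * (w' i' + 1) powi b))))"
proof -
  have plus_one_nonzero: "z \<noteq> -1 \<Longrightarrow> z + 1 \<noteq> 0" for z :: complex
    by (metis add.commute add_eq_0_iff)
  have "admissible k w w'"
    unfolding admissible_def using assms(3-5) plus_one_nonzero by blast
  then have "S_hat k a b w w' = kernel_det k a b w w'"
    using assms(2) by (intro S_hat_eq_kernel_det) simp_all
  also have "\<dots> = det (mat k k (\<lambda>(i,i').
        1 / (- w i + w' i') * (w i * (w i + 1) powi a / (w' i' * (w' i' + 1) powi (a - 1)))
      + 1 / (w i - w' i') * ((w i) ^ k * (w i + 1) powi (b + 1) / ((w' i') ^ k * (w' i' + 1) powi b))))"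
    unfolding kernel_det_def using \<open>admissible k w w'\<close>
    by (intro arg_cong[where f = det] eq_matI) (simp_all add: admissible_def kernel_eq)
  finally show ?thesis .
qed

end
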